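(* Let $n\ge 2$, $\alpha\in[0,\pi/2)$, $A\in\Pi_{s,\alpha}^n$ and $q\in\mathbb{C}$ with $0<|q|\le 1$. Then (a) $\cos(\alpha)\,w_q(A)\le\|\mathcal{R}(A)\|$; (b) $|q|\cos(\alpha)\,w_q(A)\le w_q(\mathcal{R}(A))$.
   Context: For $\alpha\in[0,\pi/2)$, $S_\alpha=\{z\in\mathbb{C}:\operatorname{Re}z>0,\ |\operatorname{Im}z|\le\tan(\alpha)\operatorname{Re}z\}$, and $\Pi_{s,\alpha}^n$ is the set of $n\times n$ complex matrices $A$ whose numerical range $W(A)=\{\langle Ax,x\rangle:\|x\|=1\}$ is contained in $S_\alpha$ (sectorial matrices). $\mathcal{R}(A)=\frac{A+A^*}{2}$. $\|\cdot\|$ is the operator (spectral) norm. For $|q|\le1$, the $q$-numerical radius is $w_q(A)=\sup\{|\langle Ax,y\rangle|:\|x\|=\|y\|=1,\ \langle x,y\rangle=q\}$. *)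

theory Defs
  imports "HOL-Analysis.Analysis"
begin

definition cinner :: "complex ^ 'n::finite \<Rightarrow> complex ^ 'n \<Rightarrow> complex" where
  "cinner x y = (\<Sum>i\<in>UNIV. x $ i * cnj (y $ i))"

definition adjoint_mat :: "complex ^ 'n::finite ^ 'n \<Rightarrow> complex ^ 'n ^ 'n" where
  "adjoint_mat A = (\<chi> i j. cnj (A $ j $ i))"

definition herm_part :: "complex ^ 'n::finite ^ 'n \<Rightarrow> complex ^ 'n ^ 'n" where
  "herm_part A = (\<chi> i j. (A $ i $ j + adjoint_mat A $ i $ j) / 2)"

definition numerical_range :: "complex ^ 'n::finite ^ 'n \<Rightarrow> complex set" where
  "numerical_range A = {cinner (A *v x) x | x. norm x = 1}"

definition sector :: "real \<Rightarrow> complex set" where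
  "sector \<alpha> = {z. Re z > 0 \<and> \<bar>Im z\<bar> \<le> tan \<alpha> * Re z}"

definition sectorial :: "real \<Rightarrow> complex ^ 'n::finite ^ 'n \<Rightarrow> bool" where
  "sectorial \<alpha> A \<longleftrightarrow> numerical_range A \<subseteq> sector \<alpha>"

definition op_norm :: "complex ^ 'n::finite ^ 'n \<Rightarrow> real" where
  "op_norm A = onorm (\<lambda>x. A *v x)"

definition q_numrad :: "complex \<Rightarrow> complex ^ 'n::finite ^ 'n \<Rightarrow> real" where
  "q_numrad q A = Sup {cmod (cinner (A *v x) y) | x y. norm x = 1 \<and> norm y = 1 \<and> cinner x y = q}"

end

theory Submission
  imports Defs
begin

(* For the form B(x,y) = <Ax,y> of a sectorial A and t = tan alpha > 0, the Hermitian parts of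
   (t - i) B and (t + i) B are positive semidefinite and B is a linear combination of them
   (for alpha = 0, B is itself Hermitian), so Cauchy-Schwarz yields
   cos alpha |<Ax,y>| <= sqrt (Re <Ax,x> Re <Ay,y>), where Re <Au,u> = <R(A)u,u>.  Hence
   cos alpha w_q(A) is bounded by any bound W of <R(A)u,u> on the unit sphere.  W = ||R(A)||
   gives (a); for (b), testing w_q(R(A)) with the two vectors y = cnj q u +- sqrt (1 - |q|^2) z,
   z a unit vector orthogonal to u (this needs n >= 2), shows that W = w_q(R(A)) / |q| is such
   a bound. *)

lemma cinner_add_left: "cinner (x + y) z = cinner x z + cinner y z"
  by (simp add: cinner_def sum.distrib distrib_right)

lemma cinner_add_right: "cinner x (y + z) = cinner x y + cinner x z"
  by (simp add: cinner_def sum.distrib distrib_left)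

lemma cinner_diff_right: "cinner x (y - z) = cinner x y - cinner x z"
  by (simp add: cinner_def sum_subtractf right_diff_distrib)

lemma cinner_scale_left: "cinner (c *s x) y = c * cinner x y"
  by (simp add: cinner_def sum_distrib_left mult.assoc)

lemma cinner_scale_right: "cinner x (c *s y) = cnj c * cinner x y"
  by (simp add: cinner_def sum_distrib_left mult_ac)

lemma cinner_commute: "cinner y x = cnj (cinner x y)"
  by (simp add: cinner_def mult.commute)

lemma cinner_self: "cinner x x = of_real ((norm x)\<^sup>2)"
proof -
  have "cinner x x = (\<Sum>i\<in>UNIV. of_real ((cmod (x $ i))\<^sup>2))"
    unfolding cinner_def by (rule sum.cong) (auto simp: complex_mult_cnj cmod_power2)
  also have "\<dots> = of_real ((norm x)\<^sup>2)"
    by (simp add: norm_vec_def L2_set_def sum_nonneg)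
  finally show ?thesis .
qed

lemma norm_eq_1_iff_cinner_self: "norm x = 1 \<longleftrightarrow> cinner x x = 1"
proof -
  have "cinner x x = 1 \<longleftrightarrow> (norm x)\<^sup>2 = 1"
    by (simp only: cinner_self of_real_eq_1_iff)
  then show ?thesis
    using norm_ge_zero[of x] by (auto simp: power2_eq_1_iff)
qed

lemma cinner_axis_right: "cinner x (axis i c) = x $ i * cnj c"
proof -
  have "cinner x (axis i c) = (\<Sum>k\<in>UNIV. if k = i then x $ i * cnj c else 0)"
    unfolding cinner_def axis_def by (rule sum.cong) auto
  then show ?thesis by simp
qed

lemma norm_cvec_scale: "norm (c *s x) = cmod c * norm (x :: complex ^ 'n::finite)"
proof -
  have "of_real ((norm (c *s x))\<^sup>2) = cinner (c *s x) (c *s x)"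
    by (rule cinner_self[symmetric])
  also have "\<dots> = c * cnj c * cinner x x"
    by (simp add: cinner_scale_left cinner_scale_right mult.assoc)
  also have "\<dots> = of_real ((cmod c * norm x)\<^sup>2)"
    by (simp only: cinner_self complex_norm_square[symmetric] power_mult_distrib of_real_mult)
  finally show ?thesis
    by (simp only: of_real_eq_iff power2_eq_iff_nonneg norm_ge_zero zero_le_mult_iff) simp
qed

lemma matrix_vector_mult_scale: "(M :: complex ^ 'n::finite ^ 'n) *v (c *s x) = c *s (M *v x)"
  by (simp add: vec_eq_iff matrix_vector_mult_def sum_distrib_left mult_ac)

type_synonym 'n cform = "complex ^ 'n \<Rightarrow> complex ^ 'n \<Rightarrow> complex"

definition sesquilinear :: "'n::finite cform \<Rightarrow> bool" where
  "sesquilinear B \<longleftrightarrow>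
     (\<forall>x y z. B (x + y) z = B x z + B y z) \<and> (\<forall>x y z. B x (y + z) = B x y + B x z) \<and>
     (\<forall>c x y. B (c *s x) y = c * B x y) \<and> (\<forall>c x y. B x (c *s y) = cnj c * B x y)"

definition herm_form :: "'n::finite cform \<Rightarrow> 'n cform" where
  "herm_form B x y = (B x y + cnj (B y x)) / 2"

lemma sesquilinear_expand:
  assumes "sesquilinear B"
  shows "B (x + c *s y) (x + c *s y) = B x x + cnj c * B x y + c * B y x + c * cnj c * B y y"
  using assms unfolding sesquilinear_def by (simp add: algebra_simps)

lemma sesquilinear_cinner: "sesquilinear cinner"
  by (simp add: sesquilinear_def cinner_add_left cinner_add_right cinner_scale_left cinner_scale_right)

lemma sesquilinear_matrix_form: "sesquilinear (\<lambda>x y. cinner (M *v x) y)"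
  by (simp add: sesquilinear_def matrix_vector_right_distrib matrix_vector_mult_scale
      cinner_add_left cinner_add_right cinner_scale_left cinner_scale_right)

lemma sesquilinear_scale: "sesquilinear B \<Longrightarrow> sesquilinear (\<lambda>x y. a * B x y)"
  by (simp add: sesquilinear_def algebra_simps)

lemma sesquilinear_herm_form: "sesquilinear B \<Longrightarrow> sesquilinear (herm_form B)"
  by (simp add: sesquilinear_def herm_form_def algebra_simps add_divide_distrib)

lemma herm_form_self: "herm_form B u u = of_real (Re (B u u))"
  by (simp add: herm_form_def complex_eq_iff)

lemma herm_form_commute: "herm_form B y x = cnj (herm_form B x y)"
  by (simp add: herm_form_def add.commute)

lemma cmod_square_le_of_quadratic_nonneg:
  fixes a d :: real and b :: complex
  assumes nonneg: "\<And>c. 0 \<le> a + 2 * Re (cnj c * b) + (cmod c)\<^sup>2 * d" and "0 \<le> d"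
  shows "(cmod b)\<^sup>2 \<le> a * d"
proof -
  have along_b: "0 \<le> a - 2 * t * (cmod b)\<^sup>2 + t\<^sup>2 * (cmod b)\<^sup>2 * d" for t :: real
  proof -
    have "Re (cnj (- (of_real t * b)) * b) = - (t * (cmod b)\<^sup>2)"
      by (simp add: cmod_power2 algebra_simps) (simp add: power2_eq_square)
    moreover have "(cmod (- (of_real t * b)))\<^sup>2 = t\<^sup>2 * (cmod b)\<^sup>2"
      by (simp add: norm_mult power_mult_distrib)
    ultimately show ?thesis
      using nonneg[of "- (of_real t * b)"] by (simp only:)
  qed
  show ?thesis
  proof (cases "d = 0")
    case True
    have "b = 0"
    proof (rule ccontr)
      assume "b \<noteq> 0"
      then have "0 < (cmod b)\<^sup>2" by simp
      have "0 \<le> a - 2 * ((a + 1) / (2 * (cmod b)\<^sup>2)) * (cmod b)\<^sup>2"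
        using along_b[of "(a + 1) / (2 * (cmod b)\<^sup>2)"] True by simp
      also have "\<dots> = -1"
        using \<open>0 < (cmod b)\<^sup>2\<close> by (simp add: field_simps)
      finally show False by simp
    qed
    then show ?thesis
      using nonneg[of 0] True by simp
  next
    case False
    then have "0 < d" using \<open>0 \<le> d\<close> by simp
    have "0 \<le> a - 2 * (1 / d) * (cmod b)\<^sup>2 + (1 / d)\<^sup>2 * (cmod b)\<^sup>2 * d"
      by (rule along_b)
    also have "\<dots> = a - (cmod b)\<^sup>2 / d"
      using \<open>0 < d\<close> by (simp add: field_simps power2_eq_square)
    finally show ?thesis
      using \<open>0 < d\<close> by (simp add: field_simps)
  qed
qed

lemma hermitian_form_cauchy_schwarz:
  assumes B: "sesquilinear B"
    and herm: "\<And>x y. B y x = cnj (B x y)"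
    and pos: "\<And>u. 0 \<le> Re (B u u)"
  shows "(cmod (B x y))\<^sup>2 \<le> Re (B x x) * Re (B y y)"
proof (rule cmod_square_le_of_quadratic_nonneg)
  fix c :: complex
  have "0 \<le> Re (B (x + c *s y) (x + c *s y))"
    by (rule pos)
  also have "\<dots> = Re (B x x) + Re (cnj c * B x y) + Re (c * cnj (B x y)) + Re (c * cnj c * B y y)"
    by (simp add: sesquilinear_expand[OF B] herm[of x y])
  also have "\<dots> = Re (B x x) + 2 * Re (cnj c * B x y) + (cmod c)\<^sup>2 * Re (B y y)"
    using cmod_power2[of c] by (simp add: power2_eq_square)
  finally show "0 \<le> Re (B x x) + 2 * Re (cnj c * B x y) + (cmod c)\<^sup>2 * Re (B y y)" .
qed (rule pos)

lemma accretive_form_cauchy_schwarz: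
  assumes "sesquilinear B" and "\<And>u. 0 \<le> Re (B u u)"
  shows "cmod (herm_form B x y) \<le> sqrt (Re (B x x) * Re (B y y))"
proof (rule real_le_rsqrt)
  have "(cmod (herm_form B x y))\<^sup>2 \<le> Re (herm_form B x x) * Re (herm_form B y y)"
    by (rule hermitian_form_cauchy_schwarz[OF sesquilinear_herm_form[OF assms(1)] herm_form_commute])
      (simp add: herm_form_self assms(2))
  then show "(cmod (herm_form B x y))\<^sup>2 \<le> Re (B x x) * Re (B y y)"
    by (simp add: herm_form_self)
qed

lemma herm_form_eq_if_real_diagonal:
  assumes B: "sesquilinear B" and real: "\<And>u. Im (B u u) = 0"
  shows "herm_form B = B"
proof -
  let ?C = "\<lambda>x y. - \<i> * B x y"
  have zero: "herm_form ?C x y = 0" for x y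
    using accretive_form_cauchy_schwarz[OF sesquilinear_scale[OF B], of "- \<i>" x y] real by simp
  have "herm_form B x y = B x y - \<i> * herm_form ?C x y" for x y
    unfolding herm_form_def complex_eq_iff by (simp add: field_simps)
  with zero show ?thesis by (simp add: fun_eq_iff)
qed

lemma sqrt_mult_add_le:
  fixes a b c d :: real
  assumes "0 \<le> a" "0 \<le> b" "0 \<le> c" "0 \<le> d"
  shows "sqrt (a * b) + sqrt (c * d) \<le> sqrt ((a + c) * (b + d))"
proof (rule real_le_rsqrt)
  have "2 * (sqrt (a * d) * sqrt (b * c)) \<le> a * d + b * c"
    using sum_squares_bound[of "sqrt (a * d)" "sqrt (b * c)"] assms
    by (simp add: power2_eq_square)
  moreover have "sqrt (a * b) * sqrt (c * d) = sqrt (a * d) * sqrt (b * c)"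
    by (simp add: real_sqrt_mult[symmetric] mult_ac)
  ultimately show "(sqrt (a * b) + sqrt (c * d))\<^sup>2 \<le> (a + c) * (b + d)"
    using assms by (simp add: power2_sum algebra_simps)
qed

lemma sectorial_form_bound:
  assumes B: "sesquilinear B" and "0 \<le> t"
    and accretive: "\<And>u. 0 \<le> Re (B u u)"
    and sector: "\<And>u. \<bar>Im (B u u)\<bar> \<le> t * Re (B u u)"
  shows "cmod (B x y) \<le> sqrt (1 + t\<^sup>2) * sqrt (Re (B x x) * Re (B y y))"
proof (cases "t = 0")
  case True
  then have "herm_form B = B"
    using sector by (intro herm_form_eq_if_real_diagonal[OF B]) (metis abs_le_zero_iff mult_zero_left)
  then show ?thesis
    using accretive_form_cauchy_schwarz[OF B accretive, of x y] True by simp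
next
  case False
  with \<open>0 \<le> t\<close> have "0 < t" by simp
  define P where "P = herm_form (\<lambda>x y. (t - \<i>) * B x y)"
  define M where "M = herm_form (\<lambda>x y. (t + \<i>) * B x y)"
  have P_diag: "Re (P u u) = t * Re (B u u) + Im (B u u)" for u
    by (simp add: P_def herm_form_self)
  have M_diag: "Re (M u u) = t * Re (B u u) - Im (B u u)" for u
    by (simp add: M_def herm_form_self)
  have P_pos: "0 \<le> Re (P u u)" and M_pos: "0 \<le> Re (M u u)" for u
    using sector[of u] by (simp_all add: P_diag M_diag)
  have P_cs: "cmod (P x y) \<le> sqrt (Re (P x x) * Re (P y y))"
    using accretive_form_cauchy_schwarz[OF sesquilinear_scale[OF B], of "t - \<i>"] P_pos
    by (simp add: P_def herm_form_self)
  have M_cs: "cmod (M x y) \<le> sqrt (Re (M x x) * Re (M y y))"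
    using accretive_form_cauchy_schwarz[OF sesquilinear_scale[OF B], of "t + \<i>"] M_pos
    by (simp add: M_def herm_form_self)
  have decompose: "2 * t * B x y = (1 + \<i> * t) * P x y + (1 - \<i> * t) * M x y"
    unfolding P_def M_def herm_form_def by (simp add: field_simps)
  have cmod_weights: "cmod (1 + \<i> * t) = sqrt (1 + t\<^sup>2)" "cmod (1 - \<i> * t) = sqrt (1 + t\<^sup>2)"
    by (simp_all add: cmod_def)
  have "2 * t * cmod (B x y) = cmod ((1 + \<i> * t) * P x y + (1 - \<i> * t) * M x y)"
    using \<open>0 < t\<close> by (simp add: decompose[symmetric] norm_mult)
  also have "\<dots> \<le> cmod ((1 + \<i> * t) * P x y) + cmod ((1 - \<i> * t) * M x y)"
    by (rule norm_triangle_ineq)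
  also have "\<dots> = sqrt (1 + t\<^sup>2) * (cmod (P x y) + cmod (M x y))"
    using cmod_weights by (simp only: norm_mult distrib_left)
  also have "\<dots> \<le> sqrt (1 + t\<^sup>2) * sqrt ((Re (P x x) + Re (M x x)) * (Re (P y y) + Re (M y y)))"
    using P_cs M_cs sqrt_mult_add_le[OF P_pos[of x] P_pos[of y] M_pos[of x] M_pos[of y]]
    by (intro mult_left_mono) auto
  also have "(Re (P x x) + Re (M x x)) * (Re (P y y) + Re (M y y)) = (2 * t)\<^sup>2 * (Re (B x x) * Re (B y y))"
    by (simp add: P_diag M_diag power2_eq_square algebra_simps)
  finally show ?thesis
    using \<open>0 < t\<close> by (simp add: real_sqrt_mult mult_ac)
qed

lemma cinner_adjoint_mat: "cinner (adjoint_mat A *v x) y = cnj (cinner (A *v y) x)"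
proof -
  have "cinner (adjoint_mat A *v x) y = (\<Sum>i\<in>UNIV. \<Sum>j\<in>UNIV. cnj (A $ j $ i) * x $ j * cnj (y $ i))"
    by (simp add: cinner_def adjoint_mat_def matrix_vector_mult_def sum_distrib_right)
  also have "\<dots> = (\<Sum>j\<in>UNIV. \<Sum>i\<in>UNIV. cnj (A $ j $ i) * x $ j * cnj (y $ i))"
    by (rule sum.swap)
  also have "\<dots> = cnj (cinner (A *v y) x)"
    by (simp add: cinner_def matrix_vector_mult_def sum_distrib_right sum_distrib_left mult_ac)
  finally show ?thesis .
qed

lemma cinner_herm_part: "cinner (herm_part A *v x) y = herm_form (\<lambda>x y. cinner (A *v x) y) x y"
proof -
  have "herm_part A *v x = (1 / 2) *s (A *v x + adjoint_mat A *v x)"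
    by (simp add: vec_eq_iff herm_part_def matrix_vector_mult_def sum.distrib[symmetric]
        sum_distrib_left algebra_simps add_divide_distrib)
  then show ?thesis
    by (simp add: herm_form_def cinner_scale_left cinner_add_left cinner_adjoint_mat)
qed

lemma Re_cinner_herm_part_self: "Re (cinner (herm_part A *v u) u) = Re (cinner (A *v u) u)"
  by (simp add: cinner_herm_part herm_form_self)

lemma sectorial_cinner_self:
  assumes "sectorial \<alpha> A"
  shows "0 \<le> Re (cinner (A *v u) u)
         \<and> \<bar>Im (cinner (A *v u) u)\<bar> \<le> tan \<alpha> * Re (cinner (A *v u) u)"
proof (cases "u = 0")
  case True
  then show ?thesis by (simp add: cinner_def)
next
  case False
  define r where "r = 1 / norm u"
  define v where "v = of_real r *s u"
  have "norm v = 1"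
    using False by (simp add: v_def r_def norm_cvec_scale norm_divide)
  then have "cinner (A *v v) v \<in> sector \<alpha>"
    using assms unfolding sectorial_def numerical_range_def by blast
  moreover have "cinner (A *v v) v = of_real (r\<^sup>2) * cinner (A *v u) u"
    by (simp add: v_def matrix_vector_mult_scale cinner_scale_left cinner_scale_right power2_eq_square)
  moreover have "0 < r\<^sup>2"
    using False by (simp add: r_def)
  ultimately show ?thesis
    by (auto simp: sector_def abs_mult zero_less_mult_iff mult.left_commute[of "r\<^sup>2"])
qed

lemma sectorial_cinner_bound:
  assumes "sectorial \<alpha> A" and "0 \<le> \<alpha>" and "\<alpha> < pi / 2"
  shows "cos \<alpha> * cmod (cinner (A *v x) y) \<le> sqrt (Re (cinner (A *v x) x) * Re (cinner (A *v y) y))"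
proof -
  have "0 < cos \<alpha>"
    using assms(2,3) by (intro cos_gt_zero_pi) auto
  have "cmod (cinner (A *v x) y)
      \<le> sqrt (1 + (tan \<alpha>)\<^sup>2) * sqrt (Re (cinner (A *v x) x) * Re (cinner (A *v y) y))"
    using sectorial_cinner_self[OF assms(1)] tan_pos_pi2_le[OF assms(2,3)]
    by (intro sectorial_form_bound[OF sesquilinear_matrix_form]) auto
  moreover have "sqrt (1 + (tan \<alpha>)\<^sup>2) = 1 / cos \<alpha>"
    using \<open>0 < cos \<alpha>\<close> by (simp add: tan_def field_simps sin_squared_eq real_sqrt_divide)
  ultimately show ?thesis
    using \<open>0 < cos \<alpha>\<close> by (simp add: field_simps)
qed

lemma cinner_cauchy_schwarz: "cmod (cinner x y) \<le> norm x * norm y"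
proof (rule power2_le_imp_le)
  show "(cmod (cinner x y))\<^sup>2 \<le> (norm x * norm y)\<^sup>2"
    using hermitian_form_cauchy_schwarz[OF sesquilinear_cinner cinner_commute, of x y]
    by (simp add: cinner_self power_mult_distrib)
qed simp

lemma cmod_cinner_le_op_norm:
  assumes "norm x = 1" and "norm y = 1"
  shows "cmod (cinner (M *v x) y) \<le> op_norm M"
proof -
  have "norm (M *v x) \<le> op_norm M * norm x"
    unfolding op_norm_def by (rule onorm) simp
  then show ?thesis
    using cinner_cauchy_schwarz[of "M *v x" y] assms by simp
qed

lemma exists_unit_orthogonal:
  fixes x :: "complex ^ 'n::finite"
  assumes "CARD('n) \<ge> 2"
  shows "\<exists>z. norm z = 1 \<and> cinner x z = 0"
proof -
  obtain i j :: 'n where "i \<noteq> j"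
    using assms by (meson card_2_iff' ex_card)
  obtain w :: "complex ^ 'n" where "w \<noteq> 0" and "cinner x w = 0"
  proof (cases "x $ i = 0")
    case True
    then show thesis
      by (intro that[of "axis i 1"]) (simp_all add: cinner_axis_right)
  next
    case False
    let ?w = "axis i (cnj (x $ j)) - axis j (cnj (x $ i))"
    have "?w $ j \<noteq> 0"
      using \<open>i \<noteq> j\<close> False by (simp add: axis_def)
    then show thesis
      by (intro that[of ?w]) (auto simp: cinner_diff_right cinner_axis_right mult.commute)
  qed
  then have "norm (of_real (1 / norm w) *s w) = 1" and "cinner x (of_real (1 / norm w) *s w) = 0"
    by (simp_all add: norm_cvec_scale norm_divide cinner_scale_right)
  then show ?thesis by blast
qed

lemma unit_vector_with_cinner:
  assumes "norm x = 1" and "norm z = 1" and "cinner x z = 0" and "s\<^sup>2 = 1 - (cmod q)\<^sup>2"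
  shows "norm (cnj q *s x + of_real s *s z) = 1" and "cinner x (cnj q *s x + of_real s *s z) = q"
proof -
  have "cinner z x = 0" and "cinner x x = 1" and "cinner z z = 1"
    using assms cinner_commute[of z x] by (simp_all add: norm_eq_1_iff_cinner_self)
  then have "cinner (cnj q *s x + of_real s *s z) (cnj q *s x + of_real s *s z) = q * cnj q + of_real (s\<^sup>2)"
    using \<open>cinner x z = 0\<close>
    by (simp add: cinner_add_left cinner_add_right cinner_scale_left cinner_scale_right power2_eq_square)
  also have "\<dots> = 1"
    using assms(4) by (simp only: complex_norm_square[symmetric] flip: of_real_add) simp
  finally show "norm (cnj q *s x + of_real s *s z) = 1"
    by (simp add: norm_eq_1_iff_cinner_self)
  show "cinner x (cnj q *s x + of_real s *s z) = q"
    using \<open>cinner x x = 1\<close> \<open>cinner x z = 0\<close>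
    by (simp add: cinner_add_right cinner_scale_right)
qed

lemma bdd_above_q_numrad_set:
  "bdd_above {cmod (cinner (M *v x) y) | x y. norm x = 1 \<and> norm y = 1 \<and> cinner x y = q}"
  by (rule bdd_aboveI[of _ "op_norm M"]) (auto intro: cmod_cinner_le_op_norm)

lemma q_numrad_upper:
  assumes "norm x = 1" and "norm y = 1" and "cinner x y = q"
  shows "cmod (cinner (M *v x) y) \<le> q_numrad q M"
  unfolding q_numrad_def using assms by (intro cSup_upper[OF _ bdd_above_q_numrad_set]) blast

lemma q_numrad_least:
  fixes M :: "complex ^ 'n::finite ^ 'n"
  assumes "CARD('n) \<ge> 2" and "cmod q \<le> 1"
    and bound: "\<And>x y. norm x = 1 \<Longrightarrow> norm y = 1 \<Longrightarrow> cinner x y = q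
                  \<Longrightarrow> cmod (cinner (M *v x) y) \<le> W"
  shows "q_numrad q M \<le> W"
  unfolding q_numrad_def
proof (rule cSup_least)
  fix i :: 'n
  have x: "norm (axis i (1::complex)) = 1"
    by (simp add: norm_eq_1_iff_cinner_self cinner_axis_right)
  obtain z where z: "norm z = 1" "cinner (axis i 1) z = 0"
    using exists_unit_orthogonal[OF assms(1)] by blast
  have "(sqrt (1 - (cmod q)\<^sup>2))\<^sup>2 = 1 - (cmod q)\<^sup>2"
    using assms(2) by (simp add: power_le_one)
  from unit_vector_with_cinner[OF x z this]
  show "{cmod (cinner (M *v x) y) | x y. norm x = 1 \<and> norm y = 1 \<and> cinner x y = q} \<noteq> {}"
    using x by blast
next
  fix r
  assume "r \<in> {cmod (cinner (M *v x) y) | x y. norm x = 1 \<and> norm y = 1 \<and> cinner x y = q}"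
  then show "r \<le> W"
    using bound by blast
qed

lemma q_numrad_ge_cmod_cinner_self:
  fixes H :: "complex ^ 'n::finite ^ 'n"
  assumes "CARD('n) \<ge> 2" and "cmod q \<le> 1" and u: "norm u = 1"
  shows "cmod q * cmod (cinner (H *v u) u) \<le> q_numrad q H"
proof -
  obtain z where z: "norm z = 1" "cinner u z = 0"
    using exists_unit_orthogonal[OF assms(1)] by blast
  define s where "s = sqrt (1 - (cmod q)\<^sup>2)"
  have s: "s\<^sup>2 = 1 - (cmod q)\<^sup>2" "(- s)\<^sup>2 = 1 - (cmod q)\<^sup>2"
    using assms(2) by (simp_all add: s_def power_le_one)
  define h where "h = cinner (H *v u) u"
  define d where "d = cinner (H *v u) z"
  have "cmod (q * h + of_real s * d) \<le> q_numrad q H"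
    using q_numrad_upper[OF u unit_vector_with_cinner[OF u z s(1)], of H]
    by (simp add: h_def d_def cinner_add_right cinner_scale_right)
  moreover have "cmod (q * h - of_real s * d) \<le> q_numrad q H"
    using q_numrad_upper[OF u unit_vector_with_cinner[OF u z s(2)], of H]
    by (simp add: h_def d_def cinner_add_right cinner_diff_right cinner_scale_right)
  moreover have "2 * cmod (q * h) \<le> cmod (q * h + of_real s * d) + cmod (q * h - of_real s * d)"
    using norm_triangle_ineq[of "q * h + of_real s * d" "q * h - of_real s * d"]
    by (simp add: norm_mult mult_ac)
  ultimately have "cmod (q * h) \<le> q_numrad q H"
    by linarith
  then show ?thesis
    by (simp add: h_def norm_mult)
qed

lemma cos_mult_q_numrad_le:
  fixes A :: "complex ^ 'n::finite ^ 'n"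
  assumes "CARD('n) \<ge> 2" and "cmod q \<le> 1"
    and "sectorial \<alpha> A" and "0 \<le> \<alpha>" and "\<alpha> < pi / 2"
    and W: "\<And>u. norm u = 1 \<Longrightarrow> Re (cinner (herm_part A *v u) u) \<le> W"
  shows "cos \<alpha> * q_numrad q A \<le> W"
proof -
  have "0 < cos \<alpha>"
    using assms(4,5) by (intro cos_gt_zero_pi) auto
  have "cos \<alpha> * cmod (cinner (A *v x) y) \<le> W" if "norm x = 1" and "norm y = 1" for x y
  proof -
    have "0 \<le> Re (cinner (A *v x) x)" and "0 \<le> Re (cinner (A *v y) y)"
      using sectorial_cinner_self[OF assms(3)] by blast+
    moreover have "Re (cinner (A *v x) x) \<le> W" and "Re (cinner (A *v y) y) \<le> W"
      using W[OF that(1)] W[OF that(2)] by (simp_all add: Re_cinner_herm_part_self)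
    ultimately have "sqrt (Re (cinner (A *v x) x) * Re (cinner (A *v y) y)) \<le> sqrt (W * W)"
      by (intro real_sqrt_le_mono mult_mono) auto
    then show ?thesis
      using sectorial_cinner_bound[OF assms(3-5), of x y] \<open>0 \<le> Re (cinner (A *v x) x)\<close>
        \<open>Re (cinner (A *v x) x) \<le> W\<close> by simp
  qed
  then have "q_numrad q A \<le> W / cos \<alpha>"
    using \<open>0 < cos \<alpha>\<close> by (intro q_numrad_least[OF assms(1,2)]) (simp add: field_simps)
  then show ?thesis
    using \<open>0 < cos \<alpha>\<close> by (simp add: field_simps)
qed

theorem mainTheorem5:
  fixes A :: "complex ^ 'n::finite ^ 'n" and \<alpha> :: real and q :: complex
  assumes "CARD('n) \<ge> 2"
    and "0 \<le> \<alpha>" and "\<alpha> < pi / 2"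
    and "sectorial \<alpha> A"
    and "0 < cmod q" and "cmod q \<le> 1"
  shows "cos \<alpha> * q_numrad q A \<le> op_norm (herm_part A)
       \<and> cmod q * cos \<alpha> * q_numrad q A \<le> q_numrad q (herm_part A)"
proof
  show "cos \<alpha> * q_numrad q A \<le> op_norm (herm_part A)"
  proof (rule cos_mult_q_numrad_le[OF assms(1,6,4,2,3)])
    fix u :: "complex ^ 'n" assume "norm u = 1"
    then show "Re (cinner (herm_part A *v u) u) \<le> op_norm (herm_part A)"
      using cmod_cinner_le_op_norm complex_Re_le_cmod order_trans by blast
  qed
  have "cos \<alpha> * q_numrad q A \<le> q_numrad q (herm_part A) / cmod q"
  proof (rule cos_mult_q_numrad_le[OF assms(1,6,4,2,3)])
    fix u :: "complex ^ 'n" assume "norm u = 1"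
    have "cmod q * Re (cinner (herm_part A *v u) u) \<le> cmod q * cmod (cinner (herm_part A *v u) u)"
      by (intro mult_left_mono complex_Re_le_cmod) simp
    also have "\<dots> \<le> q_numrad q (herm_part A)"
      by (rule q_numrad_ge_cmod_cinner_self[OF assms(1,6) \<open>norm u = 1\<close>])
    finally show "Re (cinner (herm_part A *v u) u) \<le> q_numrad q (herm_part A) / cmod q"
      using assms(5) by (simp add: field_simps)
  qed
  then show "cmod q * cos \<alpha> * q_numrad q A \<le> q_numrad q (herm_part A)"
    using assms(5) by (simp add: field_simps)
qed

end
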